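(* Let $G$ be a $\lambda$-graph and $Q$ a query over $G$. Then $Q^{\#}$ is a sharing equivalence if and only if $[n]=[m]$ (equality of locally nameless terms) for all nodes $n,m$ with $n\,Q\,m$.
   Context: A pre-$\lambda$-graph is a directed graph whose nodes are of four kinds: an application node $@(n_1,n_2)$ has exactly two children, its left child $n_1$ and its right child $n_2$; an abstraction node $\lambda(n)$ has exactly one child, its body $n$; a free variable node has no children and carries an atom $\mathrm{id}(n)$ from a fixed set of atoms, distinct free variable nodes carrying distinct atoms; a bound variable node $\mathrm{var}(l)$ has exactly one outgoing binding edge, to an abstraction node $l$ (its binder). Letters $l,l'$ denote abstraction nodes. A trace is a finite sequence of directions from $\{\swarrow,\downarrow,\searrow\}$; $\epsilon$ is the empty trace and $d\cdot\tau$ is the trace $\tau$ extended by one final step $d$. Paths $n\xrightarrow{\tau}m$ are defined inductively: $n\xrightarrow{\epsilon}n$; if $n\xrightarrow{\tau}\lambda(m)$ then $n\xrightarrow{\downarrow\cdot\tau}m$; if $n\xrightarrow{\tau}@(m_1,m_2)$ then $n\xrightarrow{\swarrow\cdot\tau}m_1$ and $n\xrightarrow{\searrow\cdot\tau}m_2$ (binding edges are never followed). We write $n\xrightarrow{\tau}$ if $n\xrightarrow{\tau}m$ for some $m$. The path $n\xrightarrow{\tau}$ crosses a node $m$ if either $n\xrightarrow{\tau}m$, or $\tau=d\cdot\tau'$ and $n\xrightarrow{\tau'}$ crosses $m$. A root is a node $r$ such that the only path ending in $r$ has the empty trace. A node $m$ dominates $n$ if every path from a root to $n$ crosses $m$.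 A $\lambda$-graph is a pre-$\lambda$-graph that has finitely many nodes, is acyclic ($n\xrightarrow{\tau}n$ holds only for $\tau=\epsilon$), and is dominated (every bound variable node $\mathrm{var}(l)$ is dominated by its binder $l$). Two nodes are homogeneous if both are application nodes, or both abstraction nodes, or both free variable nodes, or both bound variable nodes; a binary relation $R$ on nodes is homogeneous if it only relates homogeneous nodes. Rules: $(\swarrow)$: $@(n_1,n_2)\,R\,@(m_1,m_2)$ implies $n_1\,R\,m_1$; $(\searrow)$: $@(n_1,n_2)\,R\,@(m_1,m_2)$ implies $n_2\,R\,m_2$; $(\downarrow)$: $\lambda(n)\,R\,\lambda(m)$ implies $n\,R\,m$; $(\circlearrowright)$: $\mathrm{var}(n)\,R\,\mathrm{var}(m)$ implies $n\,R\,m$. $R$ is propagated if closed under $(\swarrow),(\downarrow),(\searrow)$. $R$ is open if $n\,R\,m$ implies $n=m$ for all free variable nodes $n,m$. A blind bisimulation is a homogeneous propagated relation; a bisimulation is a blind bisimulation closed also under $(\circlearrowright)$. A blind sharing equivalence is a blind bisimulation that is an equivalence relation; a sharing equivalence is an open bisimulation that is an equivalence relation. $R^*$ denotes the reflexive–symmetric–transitive closure of $R$; $R^{\Downarrow}$ (propagation) is the smallest propagated relation containing $R$; $R^{\#}$ (spreading) is the smallest propagated equivalence relation containing $R$. A query over $G$ is a binary relation on the roots of $G$. Readback. Locally nameless terms: $t::=\underline{k}\mid \mathsf{x}\mid t\,s\mid \lambda.t$ with $k\in\mathbb N$ (bound variable as de Bruijn index) and $\mathsf{x}$ an atom (free variable);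 equality is syntactic. For a path $n\xrightarrow{\tau}$ crossing an abstraction node $l$, the index $\mathrm{idx}(l,n\xrightarrow{\tau})$ is defined by induction on the crossing: it is $0$ if $n\xrightarrow{\tau}l$; for $n\xrightarrow{d\cdot\tau}l'$ with $l'$ an abstraction node different from $l$ it is $\mathrm{idx}(l,n\xrightarrow{\tau})+1$; for $n\xrightarrow{d\cdot\tau}m$ with $m$ not an abstraction node it is $\mathrm{idx}(l,n\xrightarrow{\tau})$. For a root $r$ and a path $r\xrightarrow{\tau}n$, the readback $[r\xrightarrow{\tau}n]$ is: $\underline{\mathrm{idx}(l,r\xrightarrow{\tau})}$ if $n=\mathrm{var}(l)$ (well defined by domination); $\mathrm{id}(n)$ if $n$ is a free variable node; $\lambda.[r\xrightarrow{\downarrow\cdot\tau}m]$ if $n=\lambda(m)$; $[r\xrightarrow{\swarrow\cdot\tau}n_1]\,[r\xrightarrow{\searrow\cdot\tau}n_2]$ if $n=@(n_1,n_2)$. For a root $r$, $[r]:=[r\xrightarrow{\epsilon}r]$. *)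

theory Defs
  imports Main
begin

text \<open>Node kinds: App n1 n2 (application with left/right child), Abs n (abstraction with
body n), FVar x (free variable carrying atom x), BVar l (bound variable with binding edge
to l).\<close>

datatype ('n, 'a) kind = App 'n 'n | Abs 'n | FVar 'a | BVar 'n

type_synonym ('n, 'a) graph = "'n \<Rightarrow> ('n, 'a) kind"

datatype dir = DL | DD | DR  (* DL = swarrow, DD = downarrow, DR = searrow *)

text \<open>Traces: lists of directions; the trace d.tau (tau extended by a final step d) is
represented as d # tau, i.e. the head of the list is the LAST step.\<close>

definition is_abs :: "('n,'a) graph \<Rightarrow> 'n \<Rightarrow> bool" where
  "is_abs G n \<longleftrightarrow> (\<exists>b. G n = Abs b)"

definition pre_lambda_graph :: "('n,'a) graph \<Rightarrow> bool" where
  "pre_lambda_graph G \<longleftrightarrow>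
     (\<forall>n l. G n = BVar l \<longrightarrow> is_abs G l) \<and>
     (\<forall>n m x. G n = FVar x \<and> G m = FVar x \<longrightarrow> n = m)"

inductive path :: "('n,'a) graph \<Rightarrow> 'n \<Rightarrow> dir list \<Rightarrow> 'n \<Rightarrow> bool" for G where
  p_nil: "path G n [] n"
| p_abs: "path G n \<tau> m \<Longrightarrow> G m = Abs m' \<Longrightarrow> path G n (DD # \<tau>) m'"
| p_appl: "path G n \<tau> m \<Longrightarrow> G m = App m1 m2 \<Longrightarrow> path G n (DL # \<tau>) m1"
| p_appr: "path G n \<tau> m \<Longrightarrow> G m = App m1 m2 \<Longrightarrow> path G n (DR # \<tau>) m2"

definition has_path :: "('n,'a) graph \<Rightarrow> 'n \<Rightarrow> dir list \<Rightarrow> bool" where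
  "has_path G n \<tau> \<longleftrightarrow> (\<exists>m. path G n \<tau> m)"

fun crosses :: "('n,'a) graph \<Rightarrow> 'n \<Rightarrow> dir list \<Rightarrow> 'n \<Rightarrow> bool" where
  "crosses G n [] m \<longleftrightarrow> path G n [] m"
| "crosses G n (d # \<tau>) m \<longleftrightarrow> has_path G n (d # \<tau>) \<and> (path G n (d # \<tau>) m \<or> crosses G n \<tau> m)"

definition is_root :: "('n,'a) graph \<Rightarrow> 'n \<Rightarrow> bool" where
  "is_root G r \<longleftrightarrow> (\<forall>n \<tau>. path G n \<tau> r \<longrightarrow> \<tau> = [])"

definition dominates :: "('n,'a) graph \<Rightarrow> 'n \<Rightarrow> 'n \<Rightarrow> bool" where
  "dominates G m n \<longleftrightarrow> (\<forall>r \<tau>. is_root G r \<and> path G r \<tau> n \<longrightarrow> crosses G r \<tau> m)"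

text \<open>Lambda-graph: finitely many nodes (node type of class finite), acyclic, dominated.\<close>
definition lambda_graph :: "('n::finite,'a) graph \<Rightarrow> bool" where
  "lambda_graph G \<longleftrightarrow> pre_lambda_graph G \<and>
     (\<forall>n \<tau>. path G n \<tau> n \<longrightarrow> \<tau> = []) \<and>
     (\<forall>v l. G v = BVar l \<longrightarrow> dominates G l v)"

definition homogeneous_nodes :: "('n,'a) graph \<Rightarrow> 'n \<Rightarrow> 'n \<Rightarrow> bool" where
  "homogeneous_nodes G n m \<longleftrightarrow>
     (case (G n, G m) of
        (App _ _, App _ _) \<Rightarrow> True
      | (Abs _, Abs _) \<Rightarrow> True
      | (FVar _, FVar _) \<Rightarrow> True
      | (BVar _, BVar _) \<Rightarrow> True
      | _ \<Rightarrow> False)"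

definition homogeneous :: "('n,'a) graph \<Rightarrow> 'n rel \<Rightarrow> bool" where
  "homogeneous G R \<longleftrightarrow> (\<forall>(n,m)\<in>R. homogeneous_nodes G n m)"

definition propagated :: "('n,'a) graph \<Rightarrow> 'n rel \<Rightarrow> bool" where
  "propagated G R \<longleftrightarrow>
     (\<forall>n m n1 n2 m1 m2. (n,m) \<in> R \<and> G n = App n1 n2 \<and> G m = App m1 m2 \<longrightarrow> (n1,m1) \<in> R) \<and>
     (\<forall>n m n1 n2 m1 m2. (n,m) \<in> R \<and> G n = App n1 n2 \<and> G m = App m1 m2 \<longrightarrow> (n2,m2) \<in> R) \<and>
     (\<forall>n m n' m'. (n,m) \<in> R \<and> G n = Abs n' \<and> G m = Abs m' \<longrightarrow> (n',m') \<in> R)"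

definition closed_var :: "('n,'a) graph \<Rightarrow> 'n rel \<Rightarrow> bool" where
  "closed_var G R \<longleftrightarrow>
     (\<forall>n m l l'. (n,m) \<in> R \<and> G n = BVar l \<and> G m = BVar l' \<longrightarrow> (l,l') \<in> R)"

definition open_rel :: "('n,'a) graph \<Rightarrow> 'n rel \<Rightarrow> bool" where
  "open_rel G R \<longleftrightarrow>
     (\<forall>n m x y. (n,m) \<in> R \<and> G n = FVar x \<and> G m = FVar y \<longrightarrow> n = m)"

definition blind_bisimulation :: "('n,'a) graph \<Rightarrow> 'n rel \<Rightarrow> bool" where
  "blind_bisimulation G R \<longleftrightarrow> homogeneous G R \<and> propagated G R"

definition bisimulation :: "('n,'a) graph \<Rightarrow> 'n rel \<Rightarrow> bool" where
  "bisimulation G R \<longleftrightarrow> blind_bisimulation G R \<and> closed_var G R"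

definition sharing_equivalence :: "('n,'a) graph \<Rightarrow> 'n rel \<Rightarrow> bool" where
  "sharing_equivalence G R \<longleftrightarrow> open_rel G R \<and> bisimulation G R \<and> equiv UNIV R"

text \<open>Spreading R^#: the smallest propagated equivalence relation containing R.\<close>
definition spreading :: "('n,'a) graph \<Rightarrow> 'n rel \<Rightarrow> 'n rel" where
  "spreading G R = \<Inter>{S. R \<subseteq> S \<and> propagated G S \<and> equiv UNIV S}"

definition is_query :: "('n,'a) graph \<Rightarrow> 'n rel \<Rightarrow> bool" where
  "is_query G Q \<longleftrightarrow> (\<forall>(n,m)\<in>Q. is_root G n \<and> is_root G m)"

datatype 'a lnterm = BV nat | FV 'a | Ap "'a lnterm" "'a lnterm" | Lm "'a lnterm"

fun idx :: "('n,'a) graph \<Rightarrow> 'n \<Rightarrow> 'n \<Rightarrow> dir list \<Rightarrow> nat" where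
  "idx G l n [] = 0"
| "idx G l n (d # \<tau>) =
     (if path G n (d # \<tau>) l then 0
      else if (\<exists>k. path G n (d # \<tau>) k \<and> is_abs G k) then Suc (idx G l n \<tau>)
      else idx G l n \<tau>)"

text \<open>rb G r tau t means [r -tau-> n] = t (n the endpoint of the path).\<close>
inductive rb :: "('n,'a) graph \<Rightarrow> 'n \<Rightarrow> dir list \<Rightarrow> 'a lnterm \<Rightarrow> bool" for G where
  rb_bvar: "path G r \<tau> n \<Longrightarrow> G n = BVar l \<Longrightarrow> rb G r \<tau> (BV (idx G l r \<tau>))"
| rb_fvar: "path G r \<tau> n \<Longrightarrow> G n = FVar x \<Longrightarrow> rb G r \<tau> (FV x)"
| rb_abs: "path G r \<tau> n \<Longrightarrow> G n = Abs m \<Longrightarrow> rb G r (DD # \<tau>) t \<Longrightarrow> rb G r \<tau> (Lm t)"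
| rb_app: "path G r \<tau> n \<Longrightarrow> G n = App n1 n2 \<Longrightarrow> rb G r (DL # \<tau>) t \<Longrightarrow> rb G r (DR # \<tau>) s
           \<Longrightarrow> rb G r \<tau> (Ap t s)"

definition readback :: "('n,'a) graph \<Rightarrow> 'n \<Rightarrow> 'a lnterm" where
  "readback G r = (THE t. rb G r [] t)"

end

(*
  Readback is local: [r] = [r'] iff along every trace the walks from r and r' are both undefined
  or end in nodes with the same constructor, the same free variable, or bound variables with the
  same de Bruijn index.  By domination the binder of a variable reached along \<tau> lies on the path,
  at some suffix \<sigma> of \<tau>, and the index counts the abstractions crossed after \<sigma>; so when r and
  r' have abstractions at the same traces, equal indices amount to binders at equal traces.

  If Q# is a sharing equivalence, nodes reached from Q-related roots along a common trace are
  related, hence homogeneous, equal if they are free variables, and with related binders; related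
  binders sit at the same trace, because in a finite acyclic graph a blind bisimulation never
  relates a node to a proper descendant.  Conversely, if the readbacks agree, the propagation of Q
  is an open bisimulation, and its equivalence closure, which is Q#, is a sharing equivalence.
*)

theory Submission
  imports Defs
begin

section \<open>Walks\<close>

fun child :: "('n,'a) graph \<Rightarrow> dir \<Rightarrow> 'n \<Rightarrow> 'n option" where
  "child G DD n = (case G n of Abs b \<Rightarrow> Some b | _ \<Rightarrow> None)"
| "child G DL n = (case G n of App n1 _ \<Rightarrow> Some n1 | _ \<Rightarrow> None)"
| "child G DR n = (case G n of App _ n2 \<Rightarrow> Some n2 | _ \<Rightarrow> None)"

fun walk :: "('n,'a) graph \<Rightarrow> 'n \<Rightarrow> dir list \<Rightarrow> 'n option" where
  "walk G n [] = Some n"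
| "walk G n (d # \<tau>) = Option.bind (walk G n \<tau>) (child G d)"

lemma path_iff_walk: "path G n \<tau> m \<longleftrightarrow> walk G n \<tau> = Some m"
proof
  show "path G n \<tau> m \<Longrightarrow> walk G n \<tau> = Some m"
    by (induction rule: path.induct) auto
  show "walk G n \<tau> = Some m \<Longrightarrow> path G n \<tau> m"
  proof (induction \<tau> arbitrary: m)
    case Nil
    then show ?case by (auto intro: path.intros)
  next
    case (Cons d \<tau>)
    then obtain k where "path G n \<tau> k" and "child G d k = Some m"
      by (cases "walk G n \<tau>") auto
    then show ?case
      by (cases d; cases "G k") (auto intro: path.intros)
  qed
qed

lemma walk_append: "walk G n (\<rho> @ \<sigma>) = Option.bind (walk G n \<sigma>) (\<lambda>k. walk G k \<rho>)"
  by (induction \<rho>) (auto split: option.splits)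

lemma walk_append_Some: "walk G n \<sigma> = Some k \<Longrightarrow> walk G n (\<rho> @ \<sigma>) = walk G k \<rho>"
  by (simp add: walk_append)

lemma walk_suffix: "walk G n (\<rho> @ \<sigma>) \<noteq> None \<Longrightarrow> walk G n \<sigma> \<noteq> None"
  by (cases "walk G n \<sigma>") (auto simp: walk_append)

definition acyclic_graph :: "('n,'a) graph \<Rightarrow> bool" where
  "acyclic_graph G \<longleftrightarrow> (\<forall>n \<tau>. path G n \<tau> n \<longrightarrow> \<tau> = [])"

lemma acyclic_graph_walk_cycle: "acyclic_graph G \<Longrightarrow> walk G n \<tau> = Some n \<Longrightarrow> \<tau> = []"
  by (auto simp: acyclic_graph_def path_iff_walk)

lemma lambda_graph_acyclic: "lambda_graph G \<Longrightarrow> acyclic_graph G"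
  by (simp add: lambda_graph_def acyclic_graph_def)

lemma walk_length_less_card:
  fixes G :: "('n::finite,'a) graph"
  assumes acyc: "acyclic_graph G" and walk: "walk G n \<tau> = Some m"
  shows "length \<tau> < card (UNIV :: 'n set)"
proof -
  have defined: "walk G n (drop i \<tau>) \<noteq> None" for i
    using walk walk_suffix[of G n "take i \<tau>" "drop i \<tau>"] by simp
  define f where "f i = the (walk G n (drop i \<tau>))" for i
  have "f i \<noteq> f j" if "i < j" "j \<le> length \<tau>" for i j
  proof
    assume same: "f i = f j"
    have decomp: "drop i \<tau> = take (j - i) (drop i \<tau>) @ drop j \<tau>"
      using \<open>i < j\<close> by (metis append_take_drop_id drop_drop le_add_diff_inverse2 less_imp_le)
    have "walk G (f j) (take (j - i) (drop i \<tau>)) = Some (f j)"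
      using defined[of i] defined[of j] same walk_append_Some decomp unfolding f_def
      by (metis option.collapse)
    then have "take (j - i) (drop i \<tau>) = []"
      using acyclic_graph_walk_cycle[OF acyc] by blast
    with that show False by simp
  qed
  then have "inj_on f {0..length \<tau>}"
    by (metis atLeastAtMost_iff inj_onI linorder_neqE_nat)
  then have "card {0..length \<tau>} \<le> card (UNIV :: 'n set)"
    by (rule card_inj_on_le) auto
  then show ?thesis by simp
qed

definition binder_of :: "('n,'a) graph \<Rightarrow> 'n \<Rightarrow> 'n option" where
  "binder_of G n = (case G n of BVar l \<Rightarrow> Some l | _ \<Rightarrow> None)"

lemma homogeneous_nodes_refl: "homogeneous_nodes G n n"
  by (auto simp: homogeneous_nodes_def split: kind.splits)

lemma homogeneous_nodes_sym: "homogeneous_nodes G n m \<Longrightarrow> homogeneous_nodes G m n"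
  by (auto simp: homogeneous_nodes_def split: kind.splits)

lemma homogeneous_nodes_trans:
  "homogeneous_nodes G n k \<Longrightarrow> homogeneous_nodes G k m \<Longrightarrow> homogeneous_nodes G n m"
  by (auto simp: homogeneous_nodes_def split: kind.splits)

lemma homogeneous_nodes_child:
  "homogeneous_nodes G n m \<Longrightarrow> child G d n = None \<longleftrightarrow> child G d m = None"
  by (cases d) (auto simp: homogeneous_nodes_def split: kind.splits)

lemma homogeneous_nodes_binder_of:
  "homogeneous_nodes G n m \<Longrightarrow> binder_of G n = None \<longleftrightarrow> binder_of G m = None"
  by (auto simp: homogeneous_nodes_def binder_of_def split: kind.splits)

lemma homogeneous_nodes_is_abs:
  "homogeneous_nodes G n m \<Longrightarrow> is_abs G n \<longleftrightarrow> is_abs G m"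
  by (auto simp: homogeneous_nodes_def is_abs_def split: kind.splits)

lemma homogeneousD: "homogeneous G R \<Longrightarrow> (n, m) \<in> R \<Longrightarrow> homogeneous_nodes G n m"
  by (auto simp: homogeneous_def)

lemma propagated_child:
  assumes "propagated G R" "(n, m) \<in> R" "child G d n = Some n'" "child G d m = Some m'"
  shows "(n', m') \<in> R"
proof (cases d)
  case DL
  with assms(3,4) obtain n2 m2 where "G n = App n' n2" "G m = App m' m2"
    by (auto split: kind.splits)
  with assms(1,2) show ?thesis unfolding propagated_def by blast
next
  case DR
  with assms(3,4) obtain n1 m1 where "G n = App n1 n'" "G m = App m1 m'"
    by (auto split: kind.splits)
  with assms(1,2) show ?thesis unfolding propagated_def by blast
next
  case DD
  with assms(3,4) have "G n = Abs n'" "G m = Abs m'"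
    by (auto split: kind.splits)
  with assms(1,2) show ?thesis unfolding propagated_def by blast
qed

lemma propagatedI:
  assumes "\<And>d n m n' m'. (n, m) \<in> R \<Longrightarrow> child G d n = Some n' \<Longrightarrow> child G d m = Some m'
    \<Longrightarrow> (n', m') \<in> R"
  shows "propagated G R"
  unfolding propagated_def
proof (intro conjI allI impI; elim conjE)
  fix n m n1 n2 m1 m2
  assume app: "(n, m) \<in> R" "G n = App n1 n2" "G m = App m1 m2"
  show "(n1, m1) \<in> R" by (rule assms[of n m DL]) (use app in simp_all)
  show "(n2, m2) \<in> R" by (rule assms[of n m DR]) (use app in simp_all)
next
  fix n m n' m'
  assume abs: "(n, m) \<in> R" "G n = Abs n'" "G m = Abs m'"
  show "(n', m') \<in> R" by (rule assms[of n m DD]) (use abs in simp_all)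
qed

lemma closed_var_iff_binder_of:
  "closed_var G R \<longleftrightarrow>
     (\<forall>n m l l'. (n, m) \<in> R \<longrightarrow> binder_of G n = Some l \<longrightarrow> binder_of G m = Some l' \<longrightarrow> (l, l') \<in> R)"
  unfolding closed_var_def binder_of_def by (auto split: kind.split_asm)

lemma propagated_walk:
  assumes "propagated G R" "(r, r') \<in> R"
  shows "walk G r \<tau> = Some n \<Longrightarrow> walk G r' \<tau> = Some m \<Longrightarrow> (n, m) \<in> R"
proof (induction \<tau> arbitrary: n m)
  case Nil
  with assms(2) show ?case by simp
next
  case (Cons d \<tau>)
  then obtain k k' where "walk G r \<tau> = Some k" "child G d k = Some n"
    and "walk G r' \<tau> = Some k'" "child G d k' = Some m"
    by (auto split: Option.bind_splits)
  with Cons.IH propagated_child[OF assms(1)] show ?case by blast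
qed

lemma blind_bisimulation_walk:
  assumes "blind_bisimulation G R" "(r, r') \<in> R" "walk G r \<tau> = Some n"
  shows "\<exists>m. walk G r' \<tau> = Some m \<and> (n, m) \<in> R"
  using assms(3)
proof (induction \<tau> arbitrary: n)
  case Nil
  with assms(2) show ?case by simp
next
  case (Cons d \<tau>)
  then obtain k where k: "walk G r \<tau> = Some k" "child G d k = Some n"
    by (auto split: Option.bind_splits)
  with Cons.IH obtain k' where k': "walk G r' \<tau> = Some k'" "(k, k') \<in> R"
    by blast
  have "homogeneous_nodes G k k'"
    using assms(1) k'(2) by (auto simp: blind_bisimulation_def dest: homogeneousD)
  then obtain m where "child G d k' = Some m"
    using homogeneous_nodes_child[of G k k' d] k(2) by auto
  moreover have "(n, m) \<in> R"
    using assms(1) k(2) k'(2) calculation propagated_child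
    by (auto simp: blind_bisimulation_def)
  ultimately show ?case using k' by simp
qed

lemma blind_bisimulation_walk_None_iff:
  assumes "blind_bisimulation G R" "sym R" "(r, r') \<in> R"
  shows "walk G r \<tau> = None \<longleftrightarrow> walk G r' \<tau> = None"
  using blind_bisimulation_walk[OF assms(1)] assms(3) symD[OF assms(2,3)]
  by (metis not_None_eq)

text \<open>Relating \<open>n\<close> to its \<open>\<delta>\<close>-descendant pumps: \<open>m\<close> is then related to its own
  \<open>\<delta>\<close>-descendant, and so on, producing walks longer than the number of nodes.\<close>

lemma blind_bisimulation_no_descendant:
  fixes G :: "('n::finite,'a) graph"
  assumes acyc: "acyclic_graph G" and bisim: "blind_bisimulation G R"
    and related: "(n, m) \<in> R" and descendant: "walk G n \<delta> = Some m"
  shows "\<delta> = []"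
proof (rule ccontr)
  assume "\<delta> \<noteq> []"
  have "\<exists>a b. walk G n (concat (replicate k \<delta>)) = Some a \<and> walk G a \<delta> = Some b \<and> (a, b) \<in> R" for k
  proof (induction k)
    case 0
    with related descendant show ?case by auto
  next
    case (Suc k)
    then obtain a b where "walk G n (concat (replicate k \<delta>)) = Some a"
      and ab: "walk G a \<delta> = Some b" "(a, b) \<in> R"
      by blast
    moreover obtain c where "walk G b \<delta> = Some c" "(b, c) \<in> R"
      using blind_bisimulation_walk[OF bisim ab(2,1)] by blast
    ultimately show ?case by (auto simp: walk_append)
  qed
  then obtain a where "walk G n (concat (replicate (card (UNIV :: 'n set)) \<delta>)) = Some a"
    by blast
  from walk_length_less_card[OF acyc this] \<open>\<delta> \<noteq> []\<close> show False
    by (simp add: length_concat sum_list_replicate)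
qed

section \<open>Equivalence closures of open bisimulations\<close>

lemma rtrancl_closed_under:
  assumes defined: "\<And>n m. (n, m) \<in> R \<Longrightarrow> f n = None \<longleftrightarrow> f m = None"
    and closed: "\<And>n m n' m'. (n, m) \<in> R \<Longrightarrow> f n = Some n' \<Longrightarrow> f m = Some m' \<Longrightarrow> (n', m') \<in> R"
  shows "(n, m) \<in> R\<^sup>* \<Longrightarrow> f n = Some n' \<Longrightarrow> f m = Some m' \<Longrightarrow> (n', m') \<in> R\<^sup>*"
proof (induction arbitrary: m' rule: rtrancl_induct)
  case base
  then show ?case by simp
next
  case (step k m)
  with defined obtain k' where "f k = Some k'"
    by fastforce
  with step closed show ?case
    by (meson rtrancl_into_rtrancl)
qed

lemma homogeneous_symcl: "homogeneous G R \<Longrightarrow> homogeneous G (R \<union> R\<inverse>)"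
  by (auto simp: homogeneous_def intro: homogeneous_nodes_sym)

lemma homogeneous_rtrancl:
  assumes "homogeneous G R"
  shows "homogeneous G (R\<^sup>*)"
  unfolding homogeneous_def
proof (intro ballI, clarify)
  fix n m
  assume "(n, m) \<in> R\<^sup>*"
  then show "homogeneous_nodes G n m"
    by (induction rule: rtrancl_induct)
      (use assms in \<open>auto simp: homogeneous_def homogeneous_nodes_refl intro: homogeneous_nodes_trans\<close>)
qed

lemma propagated_symcl:
  assumes "propagated G R"
  shows "propagated G (R \<union> R\<inverse>)"
proof (rule propagatedI)
  fix d n m n' m'
  assume "(n, m) \<in> R \<union> R\<inverse>" "child G d n = Some n'" "child G d m = Some m'"
  then show "(n', m') \<in> R \<union> R\<inverse>"
    using propagated_child[OF assms, of n m d n' m'] propagated_child[OF assms, of m n d m' n'] by blast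
qed

lemma propagated_rtrancl:
  assumes "homogeneous G R" "propagated G R"
  shows "propagated G (R\<^sup>*)"
proof (rule propagatedI)
  fix d
  show "(n, m) \<in> R\<^sup>* \<Longrightarrow> child G d n = Some n' \<Longrightarrow> child G d m = Some m' \<Longrightarrow> (n', m') \<in> R\<^sup>*"
    for n m n' m'
  proof (rule rtrancl_closed_under[where f = "child G d"])
    show "child G d n = None \<longleftrightarrow> child G d m = None" if "(n, m) \<in> R" for n m
      using homogeneousD[OF assms(1) that] by (rule homogeneous_nodes_child)
    show "(n', m') \<in> R" if "(n, m) \<in> R" "child G d n = Some n'" "child G d m = Some m'" for n m n' m'
      using propagated_child[OF assms(2) that] .
  qed
qed

lemma closed_var_symcl: "closed_var G R \<Longrightarrow> closed_var G (R \<union> R\<inverse>)"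
  by (auto simp: closed_var_def)

lemma closed_var_rtrancl:
  assumes "homogeneous G R" "closed_var G R"
  shows "closed_var G (R\<^sup>*)"
  unfolding closed_var_iff_binder_of
proof (intro allI impI)
  fix n m l l'
  show "(n, m) \<in> R\<^sup>* \<Longrightarrow> binder_of G n = Some l \<Longrightarrow> binder_of G m = Some l' \<Longrightarrow> (l, l') \<in> R\<^sup>*"
  proof (rule rtrancl_closed_under[where f = "binder_of G"])
    show "binder_of G n = None \<longleftrightarrow> binder_of G m = None" if "(n, m) \<in> R" for n m
      using homogeneousD[OF assms(1) that] by (rule homogeneous_nodes_binder_of)
    show "(l, l') \<in> R" if "(n, m) \<in> R" "binder_of G n = Some l" "binder_of G m = Some l'" for n m l l'
      using assms(2) that unfolding closed_var_iff_binder_of by blast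
  qed
qed

lemma open_rel_symcl: "open_rel G R \<Longrightarrow> open_rel G (R \<union> R\<inverse>)"
  by (auto simp: open_rel_def)

lemma open_rel_rtrancl:
  assumes "homogeneous G R" "open_rel G R"
  shows "open_rel G (R\<^sup>*)"
proof -
  have "(n, m) \<in> R\<^sup>* \<Longrightarrow> G n = FVar x \<Longrightarrow> \<exists>y. G m = FVar y \<Longrightarrow> n = m" for n m x
  proof (induction rule: rtrancl_induct)
    case (step k m)
    then have "homogeneous_nodes G k m"
      using assms(1) by (auto dest: homogeneousD)
    with step obtain z where "G k = FVar z"
      by (auto simp: homogeneous_nodes_def split: kind.splits)
    with step assms(2) show ?case
      by (auto simp: open_rel_def)
  qed simp
  then show ?thesis
    by (auto simp: open_rel_def)
qed

lemma equiv_equiv_closure: "equiv UNIV ((R \<union> R\<inverse>)\<^sup>*)"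
  by (simp add: equiv_def refl_rtrancl trans_rtrancl sym_rtrancl[OF sym_Un_converse])

lemma sharing_equivalence_equiv_closure:
  assumes "open_rel G R" "bisimulation G R"
  shows "sharing_equivalence G ((R \<union> R\<inverse>)\<^sup>*)"
proof -
  have "homogeneous G (R \<union> R\<inverse>)" "propagated G (R \<union> R\<inverse>)" "closed_var G (R \<union> R\<inverse>)"
    "open_rel G (R \<union> R\<inverse>)"
    using assms homogeneous_symcl propagated_symcl closed_var_symcl open_rel_symcl
    by (auto simp: bisimulation_def blind_bisimulation_def)
  then show ?thesis
    unfolding sharing_equivalence_def bisimulation_def blind_bisimulation_def
    using homogeneous_rtrancl propagated_rtrancl closed_var_rtrancl open_rel_rtrancl
      equiv_equiv_closure by blast
qed

definition propagation :: "('n,'a) graph \<Rightarrow> 'n rel \<Rightarrow> 'n rel" where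
  "propagation G Q = {(n, m). \<exists>r r' \<tau>. (r, r') \<in> Q \<and> walk G r \<tau> = Some n \<and> walk G r' \<tau> = Some m}"

lemma subset_propagation: "Q \<subseteq> propagation G Q"
proof clarify
  fix n m
  assume "(n, m) \<in> Q"
  moreover have "walk G n [] = Some n" "walk G m [] = Some m"
    by simp_all
  ultimately show "(n, m) \<in> propagation G Q"
    unfolding propagation_def by blast
qed

lemma propagated_propagation: "propagated G (propagation G Q)"
proof (rule propagatedI)
  fix d n m n' m'
  assume "(n, m) \<in> propagation G Q" and children: "child G d n = Some n'" "child G d m = Some m'"
  then obtain r r' \<tau> where "(r, r') \<in> Q" "walk G r \<tau> = Some n" "walk G r' \<tau> = Some m"
    unfolding propagation_def by blast
  moreover from calculation(2,3) children have
    "walk G r (d # \<tau>) = Some n'" "walk G r' (d # \<tau>) = Some m'"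
    by simp_all
  ultimately show "(n', m') \<in> propagation G Q"
    unfolding propagation_def by blast
qed

lemma propagation_least:
  assumes "propagated G S" "Q \<subseteq> S"
  shows "propagation G Q \<subseteq> S"
proof clarify
  fix n m
  assume "(n, m) \<in> propagation G Q"
  then obtain r r' \<tau> where "(r, r') \<in> Q" "walk G r \<tau> = Some n" "walk G r' \<tau> = Some m"
    unfolding propagation_def by blast
  with assms show "(n, m) \<in> S"
    using propagated_walk[OF assms(1)] by blast
qed

lemma spreading_eq_equiv_closure:
  assumes "homogeneous G (propagation G Q)"
  shows "spreading G Q = (propagation G Q \<union> (propagation G Q)\<inverse>)\<^sup>*"
    (is "_ = ?E")
proof
  have "propagated G ?E"
    by (rule propagated_rtrancl[OF homogeneous_symcl[OF assms] propagated_symcl[OF propagated_propagation]])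
  moreover have "Q \<subseteq> ?E"
    using subset_propagation by fastforce
  ultimately show "spreading G Q \<subseteq> ?E"
    unfolding spreading_def using equiv_equiv_closure by (intro Inter_lower) simp
next
  show "?E \<subseteq> spreading G Q"
    unfolding spreading_def
  proof (rule Inter_greatest)
    fix S
    assume "S \<in> {S. Q \<subseteq> S \<and> propagated G S \<and> equiv UNIV S}"
    then have "Q \<subseteq> S" "propagated G S" "equiv UNIV S"
      by simp_all
    then have "propagation G Q \<subseteq> S" "sym S"
      by (simp_all add: propagation_least equiv_def)
    then have "propagation G Q \<union> (propagation G Q)\<inverse> \<subseteq> S"
      by (auto dest: symD)
    then have "?E \<subseteq> S\<^sup>*"
      by (rule rtrancl_mono)
    moreover have "S\<^sup>* = S"
      using \<open>equiv UNIV S\<close> by (auto simp: equiv_def rtrancl_trancl_reflcl refl_on_def)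
    ultimately show "?E \<subseteq> S"
      by simp
  qed
qed

section \<open>Readback through heads\<close>

datatype 'a head = HApp | HAbs | HFV 'a | HBV nat

fun head_of :: "'a lnterm \<Rightarrow> 'a head" where
  "head_of (Ap _ _) = HApp"
| "head_of (Lm _) = HAbs"
| "head_of (FV x) = HFV x"
| "head_of (BV i) = HBV i"

text \<open>The root constructor of the readback \<open>[r -\<tau>->]\<close> of the paper.\<close>

definition head_at :: "('n,'a) graph \<Rightarrow> 'n \<Rightarrow> dir list \<Rightarrow> 'a head option" where
  "head_at G r \<tau> = map_option
     (\<lambda>n. case G n of App _ _ \<Rightarrow> HApp | Abs _ \<Rightarrow> HAbs | FVar x \<Rightarrow> HFV x | BVar l \<Rightarrow> HBV (idx G l r \<tau>))
     (walk G r \<tau>)"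

fun term_child :: "dir \<Rightarrow> 'a lnterm \<Rightarrow> 'a lnterm option" where
  "term_child DD (Lm t) = Some t"
| "term_child DL (Ap t _) = Some t"
| "term_child DR (Ap _ s) = Some s"
| "term_child _ _ = None"

fun subterm_at :: "'a lnterm \<Rightarrow> dir list \<Rightarrow> 'a lnterm option" where
  "subterm_at t [] = Some t"
| "subterm_at t (d # \<tau>) = Option.bind (subterm_at t \<tau>) (term_child d)"

lemma subterm_at_snoc: "subterm_at t (\<tau> @ [d]) = Option.bind (term_child d t) (\<lambda>u. subterm_at u \<tau>)"
  by (induction \<tau>) (auto split: Option.bind_splits)

lemma lnterm_eq_if_head_of_subterm_at_eq:
  "(\<And>\<tau>. map_option head_of (subterm_at t \<tau>) = map_option head_of (subterm_at s \<tau>)) \<Longrightarrow> t = s"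
proof (induction t arbitrary: s)
  case (BV i)
  from BV.prems[of "[]"] show ?case by (cases s) auto
next
  case (FV x)
  from FV.prems[of "[]"] show ?case by (cases s) auto
next
  case (Ap t1 t2)
  from Ap.prems[of "[]"] obtain s1 s2 where s: "s = Ap s1 s2"
    by (cases s) auto
  show ?case
    using Ap.IH(1)[of s1] Ap.IH(2)[of s2] Ap.prems[of "_ @ [DL]"] Ap.prems[of "_ @ [DR]"]
    by (simp add: s subterm_at_snoc)
next
  case (Lm t1)
  from Lm.prems[of "[]"] obtain s1 where s: "s = Lm s1"
    by (cases s) auto
  show ?case
    using Lm.IH[of s1] Lm.prems[of "_ @ [DD]"] by (simp add: s subterm_at_snoc)
qed

lemma rb_walk: "rb G r \<tau> t \<Longrightarrow> walk G r \<tau> \<noteq> None"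
  by (cases rule: rb.cases) (auto simp: path_iff_walk)

lemma rb_cases_walk:
  assumes "rb G r \<tau> t" "walk G r \<tau> = Some n"
  shows "case G n of
      App _ _ \<Rightarrow> \<exists>u v. t = Ap u v \<and> rb G r (DL # \<tau>) u \<and> rb G r (DR # \<tau>) v
    | Abs _ \<Rightarrow> \<exists>u. t = Lm u \<and> rb G r (DD # \<tau>) u
    | FVar x \<Rightarrow> t = FV x
    | BVar l \<Rightarrow> t = BV (idx G l r \<tau>)"
  using assms by (cases rule: rb.cases) (auto simp: path_iff_walk)

lemma head_at_rb: "rb G r \<tau> t \<Longrightarrow> head_at G r \<tau> = Some (head_of t)"
proof -
  assume rb: "rb G r \<tau> t"
  then obtain n where n: "walk G r \<tau> = Some n"
    using rb_walk by fastforce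
  with rb_cases_walk[OF rb n] show ?thesis
    by (cases "G n") (auto simp: head_at_def)
qed

lemma rb_child:
  assumes "rb G r \<tau> t" "walk G r \<tau> = Some n"
  shows "child G d n = None \<longleftrightarrow> term_child d t = None"
    and "term_child d t = Some u \<Longrightarrow> rb G r (d # \<tau>) u"
  using rb_cases_walk[OF assms] by (cases d; cases "G n"; auto)+

lemma rb_subterm_at:
  assumes "rb G r [] t"
  shows "(walk G r \<tau> = None \<longleftrightarrow> subterm_at t \<tau> = None)
    \<and> (\<forall>u. subterm_at t \<tau> = Some u \<longrightarrow> rb G r \<tau> u)"
proof (induction \<tau>)
  case Nil
  with assms show ?case by simp
next
  case (Cons d \<tau>)
  show ?case
  proof (cases "walk G r \<tau>")
    case None
    with Cons.IH show ?thesis by simp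
  next
    case (Some n)
    with Cons.IH obtain u where "subterm_at t \<tau> = Some u" "rb G r \<tau> u"
      by fastforce
    with Some rb_child[of G r \<tau> u n d] show ?thesis by simp
  qed
qed

lemma head_at_readback: "rb G r [] t \<Longrightarrow> head_at G r \<tau> = map_option head_of (subterm_at t \<tau>)"
  using rb_subterm_at[of G r t \<tau>] head_at_rb[of G r \<tau>]
  by (cases "subterm_at t \<tau>") (auto simp: head_at_def)

lemma rb_exists:
  fixes G :: "('n::finite,'a) graph"
  assumes acyc: "acyclic_graph G"
  shows "walk G r \<tau> = Some n \<Longrightarrow> \<exists>t. rb G r \<tau> t"
proof (induction "card (UNIV :: 'n set) - length \<tau>" arbitrary: \<tau> n rule: less_induct)
  case less
  have shorter: "card (UNIV :: 'n set) - length (d # \<tau>) < card (UNIV :: 'n set) - length \<tau>" for d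
    using walk_length_less_card[OF acyc less.prems] by simp
  have path: "path G r \<tau> n"
    using less.prems by (simp add: path_iff_walk)
  show ?case
  proof (cases "G n")
    case (App n1 n2)
    with less.prems have "walk G r (DL # \<tau>) = Some n1" "walk G r (DR # \<tau>) = Some n2"
      by simp_all
    with less.hyps[OF shorter] obtain u v where "rb G r (DL # \<tau>) u" "rb G r (DR # \<tau>) v"
      by blast
    with path App show ?thesis by (blast intro: rb_app)
  next
    case (Abs b)
    with less.prems have "walk G r (DD # \<tau>) = Some b"
      by simp
    with less.hyps[OF shorter] obtain u where "rb G r (DD # \<tau>) u"
      by blast
    with path Abs show ?thesis by (blast intro: rb_abs)
  qed (use path in \<open>blast intro: rb_fvar rb_bvar\<close>)+
qed

lemma readback_eq: "rb G r [] t \<Longrightarrow> readback G r = t"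
  unfolding readback_def
proof (rule the_equality)
  fix t'
  assume "rb G r [] t" "rb G r [] t'"
  then show "t' = t"
    using head_at_readback lnterm_eq_if_head_of_subterm_at_eq by metis
qed

lemma readback_eq_iff_head_at_eq:
  fixes G :: "('n::finite,'a) graph"
  assumes "acyclic_graph G"
  shows "readback G r = readback G r' \<longleftrightarrow> (\<forall>\<tau>. head_at G r \<tau> = head_at G r' \<tau>)"
proof -
  obtain t t' where "rb G r [] t" "rb G r' [] t'"
    using rb_exists[OF assms] by (metis walk.simps(1))
  then show ?thesis
    using readback_eq head_at_readback lnterm_eq_if_head_of_subterm_at_eq by metis
qed

section \<open>De Bruijn indices\<close>

definition abs_at :: "('n,'a) graph \<Rightarrow> 'n \<Rightarrow> dir list \<Rightarrow> bool" where
  "abs_at G r \<sigma> \<longleftrightarrow> (\<exists>k. walk G r \<sigma> = Some k \<and> is_abs G k)"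

lemma abs_at_iff_head_at: "abs_at G r \<sigma> \<longleftrightarrow> head_at G r \<sigma> = Some HAbs"
  by (cases "walk G r \<sigma>") (auto simp: abs_at_def head_at_def is_abs_def split: kind.splits)

fun abs_count :: "('n,'a) graph \<Rightarrow> 'n \<Rightarrow> dir list \<Rightarrow> dir list \<Rightarrow> nat" where
  "abs_count G r [] \<sigma> = 0"
| "abs_count G r (d # \<rho>) \<sigma> = (if abs_at G r (d # \<rho> @ \<sigma>) then 1 else 0) + abs_count G r \<rho> \<sigma>"

text \<open>By acyclicity the path never returns to \<open>l\<close>, so \<open>idx\<close> never resets to \<open>0\<close>.\<close>

lemma idx_eq_abs_count:
  assumes acyc: "acyclic_graph G" and bound: "walk G r \<sigma> = Some l"
  shows "idx G l r (\<rho> @ \<sigma>) = abs_count G r \<rho> \<sigma>"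
proof (induction \<rho>)
  case Nil
  from bound show ?case by (cases \<sigma>) (auto simp: path_iff_walk)
next
  case (Cons d \<rho>)
  have "\<not> path G r (d # \<rho> @ \<sigma>) l"
  proof
    assume "path G r (d # \<rho> @ \<sigma>) l"
    then have "walk G l (d # \<rho>) = Some l"
      using walk_append_Some[OF bound, of "d # \<rho>"] by (simp add: path_iff_walk)
    then show False
      using acyclic_graph_walk_cycle[OF acyc] by blast
  qed
  with Cons.IH show ?case
    by (auto simp: abs_at_def path_iff_walk)
qed

lemma abs_count_cong:
  "(\<And>\<sigma>. abs_at G r \<sigma> = abs_at G r' \<sigma>) \<Longrightarrow> abs_count G r \<rho> \<sigma> = abs_count G r' \<rho> \<sigma>"
  by (induction \<rho>) simp_all

lemma abs_count_append: "abs_count G r (\<rho> @ \<delta>) \<sigma> = abs_count G r \<rho> (\<delta> @ \<sigma>) + abs_count G r \<delta> \<sigma>"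
  by (induction \<rho>) simp_all

lemma abs_count_less:
  "\<delta> \<noteq> [] \<Longrightarrow> abs_at G r (\<delta> @ \<sigma>) \<Longrightarrow> abs_count G r \<rho> (\<delta> @ \<sigma>) < abs_count G r (\<rho> @ \<delta>) \<sigma>"
  by (cases \<delta>) (simp_all add: abs_count_append)

lemma abs_count_inj:
  assumes split: "\<rho>0 @ \<sigma>0 = \<rho>1 @ \<sigma>1" and abs: "abs_at G r \<sigma>0" "abs_at G r \<sigma>1"
    and count: "abs_count G r \<rho>0 \<sigma>0 = abs_count G r \<rho>1 \<sigma>1"
  shows "\<sigma>0 = \<sigma>1"
proof -
  from split consider (longer1) \<delta> where "\<sigma>1 = \<delta> @ \<sigma>0" "\<rho>0 = \<rho>1 @ \<delta>"
    | (longer0) \<delta> where "\<sigma>0 = \<delta> @ \<sigma>1" "\<rho>1 = \<rho>0 @ \<delta>"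
    by (auto simp: append_eq_append_conv2)
  then show ?thesis
  proof cases
    case longer1
    with abs(2) count show ?thesis
      using abs_count_less[of \<delta> G r \<sigma>0 \<rho>1] by fastforce
  next
    case longer0
    with abs(1) count show ?thesis
      using abs_count_less[of \<delta> G r \<sigma>1 \<rho>0] by fastforce
  qed
qed

lemma crosses_walk: "crosses G n \<tau> l \<Longrightarrow> \<exists>\<rho> \<sigma>. \<tau> = \<rho> @ \<sigma> \<and> walk G n \<sigma> = Some l"
proof (induction \<tau>)
  case Nil
  then show ?case by (simp add: path_iff_walk)
next
  case (Cons d \<tau>)
  then show ?case
    by (metis append_Cons append_Nil crosses.simps(2) path_iff_walk)
qed

lemma lambda_graph_binder_on_walk:
  assumes "lambda_graph G" "is_root G r" "walk G r \<tau> = Some v" "G v = BVar l"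
  shows "\<exists>\<rho> \<sigma>. \<tau> = \<rho> @ \<sigma> \<and> walk G r \<sigma> = Some l"
proof -
  from assms(1,4) have "dominates G l v"
    by (simp add: lambda_graph_def)
  with assms(2,3) have "crosses G r \<tau> l"
    by (simp add: dominates_def path_iff_walk)
  then show ?thesis
    by (rule crosses_walk)
qed

lemma lambda_graph_idx_eq_iff:
  fixes G :: "('n::finite,'a) graph"
  assumes lg: "lambda_graph G" and roots: "is_root G r" "is_root G r'"
    and shape: "\<And>\<sigma>. abs_at G r \<sigma> \<longleftrightarrow> abs_at G r' \<sigma>"
    and vars: "walk G r \<tau> = Some n" "walk G r' \<tau> = Some m" "G n = BVar l" "G m = BVar l'"
  obtains \<rho>0 \<sigma>0 \<rho>1 \<sigma>1 where "\<tau> = \<rho>0 @ \<sigma>0" "\<tau> = \<rho>1 @ \<sigma>1"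
    and "walk G r \<sigma>0 = Some l" "walk G r' \<sigma>1 = Some l'"
    and "idx G l r \<tau> = idx G l' r' \<tau> \<longleftrightarrow> \<sigma>0 = \<sigma>1"
proof -
  have acyc: "acyclic_graph G"
    using lg by (rule lambda_graph_acyclic)
  obtain \<rho>0 \<sigma>0 \<rho>1 \<sigma>1 where \<tau>: "\<tau> = \<rho>0 @ \<sigma>0" "\<tau> = \<rho>1 @ \<sigma>1"
    and l: "walk G r \<sigma>0 = Some l" and l': "walk G r' \<sigma>1 = Some l'"
    using lambda_graph_binder_on_walk[OF lg roots(1) vars(1,3)]
      lambda_graph_binder_on_walk[OF lg roots(2) vars(2,4)] by blast
  have "is_abs G l" "is_abs G l'"
    using lg vars(3,4) by (auto simp: lambda_graph_def pre_lambda_graph_def)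
  with l l' shape have abs: "abs_at G r \<sigma>0" "abs_at G r \<sigma>1"
    by (auto simp: abs_at_def)
  have "idx G l r \<tau> = abs_count G r \<rho>0 \<sigma>0" "idx G l' r' \<tau> = abs_count G r \<rho>1 \<sigma>1"
    using \<tau> idx_eq_abs_count[OF acyc l] idx_eq_abs_count[OF acyc l'] abs_count_cong[OF shape]
    by metis+
  moreover have "\<rho>0 = \<rho>1" if "\<sigma>0 = \<sigma>1"
    using \<tau> that by simp
  ultimately have "idx G l r \<tau> = idx G l' r' \<tau> \<longleftrightarrow> \<sigma>0 = \<sigma>1"
    using \<tau> abs_count_inj[OF _ abs] by metis
  with \<tau> l l' show thesis
    by (rule that)
qed

lemma blind_bisimulation_abs_at:
  assumes "blind_bisimulation G R" "sym R" "(r, r') \<in> R"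
  shows "abs_at G r \<sigma> \<longleftrightarrow> abs_at G r' \<sigma>"
proof -
  have "abs_at G r' \<sigma>" if "blind_bisimulation G R" "(r, r') \<in> R" "abs_at G r \<sigma>" for r r'
  proof -
    from that(3) obtain k where k: "walk G r \<sigma> = Some k" "is_abs G k"
      by (auto simp: abs_at_def)
    with blind_bisimulation_walk[OF that(1,2)] obtain k' where "walk G r' \<sigma> = Some k'" "(k, k') \<in> R"
      by blast
    with that(1) k(2) show ?thesis
      by (auto simp: abs_at_def blind_bisimulation_def dest: homogeneousD homogeneous_nodes_is_abs)
  qed
  with assms symD[OF assms(2,3)] show ?thesis by blast
qed

lemma related_walk_ends_no_proper_extension:
  fixes G :: "('n::finite,'a) graph"
  assumes acyc: "acyclic_graph G" and bisim: "blind_bisimulation G R" and eq: "equiv UNIV R"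
    and roots: "(r, r') \<in> R" and ends: "walk G r \<sigma> = Some l" "walk G r' (\<delta> @ \<sigma>) = Some l'" "(l, l') \<in> R"
  shows "\<delta> = []"
proof -
  obtain p where p: "walk G r' \<sigma> = Some p" "(l, p) \<in> R"
    using blind_bisimulation_walk[OF bisim roots ends(1)] by blast
  with eq ends(3) have "(p, l') \<in> R"
    by (meson equivE symE transE)
  moreover from p(1) ends(2) have "walk G p \<delta> = Some l'"
    by (simp add: walk_append_Some)
  ultimately show ?thesis
    by (rule blind_bisimulation_no_descendant[OF acyc bisim])
qed

lemma sharing_equivalence_idx_eq:
  fixes G :: "('n::finite,'a) graph"
  assumes lg: "lambda_graph G" and se: "sharing_equivalence G R"
    and roots: "(r, r') \<in> R" "is_root G r" "is_root G r'"
    and vars: "walk G r \<tau> = Some n" "walk G r' \<tau> = Some m" "(n, m) \<in> R"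
      "G n = BVar l" "G m = BVar l'"
  shows "idx G l r \<tau> = idx G l' r' \<tau>"
proof -
  have acyc: "acyclic_graph G"
    using lg by (rule lambda_graph_acyclic)
  have bisim: "blind_bisimulation G R" and eq: "equiv UNIV R" and "closed_var G R"
    using se by (simp_all add: sharing_equivalence_def bisimulation_def)
  then have binders: "(l, l') \<in> R"
    using vars(3-5) by (simp add: closed_var_def)
  have sym: "(r', r) \<in> R" "(l', l) \<in> R"
    using eq roots(1) binders by (auto simp: equiv_def dest: symD)
  have "abs_at G r \<sigma> \<longleftrightarrow> abs_at G r' \<sigma>" for \<sigma>
    using blind_bisimulation_abs_at[OF bisim _ roots(1)] eq by (simp add: equiv_def)
  then obtain \<rho>0 \<sigma>0 \<rho>1 \<sigma>1 where \<tau>: "\<rho>0 @ \<sigma>0 = \<rho>1 @ \<sigma>1"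
    and l: "walk G r \<sigma>0 = Some l" and l': "walk G r' \<sigma>1 = Some l'"
    and idx: "idx G l r \<tau> = idx G l' r' \<tau> \<longleftrightarrow> \<sigma>0 = \<sigma>1"
    using lambda_graph_idx_eq_iff[OF lg roots(2,3) _ vars(1,2,4,5)] by metis
  from \<tau> consider (longer1) \<delta> where "\<sigma>1 = \<delta> @ \<sigma>0" | (longer0) \<delta> where "\<sigma>0 = \<delta> @ \<sigma>1"
    by (auto simp: append_eq_append_conv2)
  then show ?thesis
  proof cases
    case longer1
    with related_walk_ends_no_proper_extension[OF acyc bisim eq roots(1) l _ binders] l' idx
    show ?thesis by simp
  next
    case longer0
    with related_walk_ends_no_proper_extension[OF acyc bisim eq sym(1) l' _ sym(2)] l idx
    show ?thesis by simp
  qed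
qed

lemma sharing_equivalence_head_at_eq:
  fixes G :: "('n::finite,'a) graph"
  assumes lg: "lambda_graph G" and se: "sharing_equivalence G R"
    and roots: "(r, r') \<in> R" "is_root G r" "is_root G r'"
  shows "head_at G r \<tau> = head_at G r' \<tau>"
proof -
  have bisim: "blind_bisimulation G R" and "sym R" and "open_rel G R"
    using se by (simp_all add: sharing_equivalence_def bisimulation_def equiv_def)
  show ?thesis
  proof (cases "walk G r \<tau>")
    case None
    with blind_bisimulation_walk_None_iff[OF bisim \<open>sym R\<close> roots(1)] show ?thesis
      by (simp add: head_at_def)
  next
    case (Some n)
    with blind_bisimulation_walk[OF bisim roots(1)] obtain m
      where m: "walk G r' \<tau> = Some m" "(n, m) \<in> R"
      by blast
    with bisim have "homogeneous_nodes G n m"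
      by (auto simp: blind_bisimulation_def dest: homogeneousD)
    moreover have "n = m" if "G n = FVar x" "G m = FVar y" for x y
      using \<open>open_rel G R\<close> m(2) that unfolding open_rel_def by blast
    ultimately show ?thesis
      using Some m sharing_equivalence_idx_eq[OF lg se roots Some m]
      by (auto simp: head_at_def homogeneous_nodes_def split: kind.splits)
  qed
qed

lemma propagation_closed_var:
  fixes G :: "('n::finite,'a) graph"
  assumes lg: "lambda_graph G" and query: "is_query G Q"
    and heads: "\<And>r r' \<tau>. (r, r') \<in> Q \<Longrightarrow> head_at G r \<tau> = head_at G r' \<tau>"
  shows "closed_var G (propagation G Q)"
  unfolding closed_var_def
proof (intro allI impI, elim conjE)
  fix n m l l'
  assume "(n, m) \<in> propagation G Q" and vars: "G n = BVar l" "G m = BVar l'"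
  then obtain r r' \<tau> where Q: "(r, r') \<in> Q" and walks: "walk G r \<tau> = Some n" "walk G r' \<tau> = Some m"
    unfolding propagation_def by blast
  have roots: "is_root G r" "is_root G r'"
    using query Q by (auto simp: is_query_def)
  have "abs_at G r \<sigma> \<longleftrightarrow> abs_at G r' \<sigma>" for \<sigma>
    using heads[OF Q] by (simp add: abs_at_iff_head_at)
  moreover from heads[OF Q, of \<tau>] walks vars have "idx G l r \<tau> = idx G l' r' \<tau>"
    by (simp add: head_at_def)
  ultimately obtain \<sigma> where "walk G r \<sigma> = Some l" "walk G r' \<sigma> = Some l'"
    using lambda_graph_idx_eq_iff[OF lg roots _ walks vars] by metis
  with Q show "(l, l') \<in> propagation G Q"
    unfolding propagation_def by blast
qed

lemma propagation_open_bisimulation: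
  fixes G :: "('n::finite,'a) graph"
  assumes lg: "lambda_graph G" and query: "is_query G Q"
    and heads: "\<And>r r' \<tau>. (r, r') \<in> Q \<Longrightarrow> head_at G r \<tau> = head_at G r' \<tau>"
  shows "open_rel G (propagation G Q)" "bisimulation G (propagation G Q)"
proof -
  have fvar_unique: "G n = FVar x \<Longrightarrow> G m = FVar x \<Longrightarrow> n = m" for n m x
    using lg by (auto simp: lambda_graph_def pre_lambda_graph_def)
  have local: "homogeneous_nodes G n m \<and> (\<forall>x y. G n = FVar x \<longrightarrow> G m = FVar y \<longrightarrow> n = m)"
    if "(n, m) \<in> propagation G Q" for n m
  proof -
    from that obtain r r' \<tau> where Q: "(r, r') \<in> Q" and walks: "walk G r \<tau> = Some n" "walk G r' \<tau> = Some m"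
      unfolding propagation_def by blast
    from heads[OF Q, of \<tau>] walks show ?thesis
      by (auto simp: head_at_def homogeneous_nodes_def intro: fvar_unique split: kind.splits)
  qed
  then show "open_rel G (propagation G Q)"
    by (auto simp: open_rel_def)
  from local have "homogeneous G (propagation G Q)"
    by (auto simp: homogeneous_def)
  with propagated_propagation propagation_closed_var[OF assms] show "bisimulation G (propagation G Q)"
    by (simp add: bisimulation_def blind_bisimulation_def)
qed

theorem mainTheorem3:
  fixes G :: "('n::finite, 'a) graph" and Q :: "'n rel"
  assumes "lambda_graph G" and "is_query G Q"
  shows "sharing_equivalence G (spreading G Q) \<longleftrightarrow>
         (\<forall>n m. (n, m) \<in> Q \<longrightarrow> readback G n = readback G m)"
proof -
  have "sharing_equivalence G (spreading G Q) \<longleftrightarrow>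
      (\<forall>r r'. (r, r') \<in> Q \<longrightarrow> (\<forall>\<tau>. head_at G r \<tau> = head_at G r' \<tau>))"
    (is "?shared \<longleftrightarrow> ?heads")
  proof
    assume shared: ?shared
    have "Q \<subseteq> spreading G Q"
      by (auto simp: spreading_def)
    with assms(2) show ?heads
      using sharing_equivalence_head_at_eq[OF assms(1) shared] by (fastforce simp: is_query_def)
  next
    assume ?heads
    with propagation_open_bisimulation[OF assms] spreading_eq_equiv_closure
    show ?shared
      by (metis sharing_equivalence_equiv_closure bisimulation_def blind_bisimulation_def)
  qed
  also have "\<dots> \<longleftrightarrow> (\<forall>n m. (n, m) \<in> Q \<longrightarrow> readback G n = readback G m)"
    using readback_eq_iff_head_at_eq[OF lambda_graph_acyclic[OF assms(1)]] by blast
  finally show ?thesis .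
qed

end
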